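(* Let $(Z_0,\dots,Z_H)$ be a process on an abstract state space with transitions $Z_{j+1}\mid Z_j\sim K_j(\cdot\mid Z_j)$ satisfying $\eta_{\chi^2}(K_j)\le\eta<1$ for all $j$. Let $\mathcal{T}\subseteq\{1,\dots,H-1\}$ be an inspection schedule with $|\mathcal{T}|=m$ and inspection outputs $Y_u=g_u(Z_u)$, $u\in\mathcal{T}\cup\{H\}$. Fix $n\ge1$, $\Delta^2\in(0,\infty)$, $\epsilon\in(0,1/2)$, and suppose that for every step $t\in\{0,\dots,H-1\}$ we are given two hypotheses under which $Z_t$ has distributions $P^{(0)}_t\ll P^{(1)}_t$ with $\chi^2(P^{(0)}_t\|P^{(1)}_t)=\Delta^2$ and the kernels $K_j$, $j\ge t$, and the maps $g_u$ are common to both. If every step $t$ is $(n,\epsilon)$-distinguishable, i.e. some test based on $n$ i.i.d. samples of $Y_{u(t)}$, where $u(t)=\min\{u\in\mathcal{T}\cup\{H\}:u>t\}$, distinguishes its two hypotheses with total testing error at most $\epsilon$, then $$m\ge\Big\lceil\frac{H}{H_{\mathrm{crit}}(\epsilon)}\Big\rceil-1,\qquad H_{\mathrm{crit}}(\epsilon)=\frac{\ln(n\Delta^2)-2\ln(1-\epsilon)}{\ln(1/\eta)}.$$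
   Context: $\chi^2(P\|Q)=\int(dP/dQ-1)^2dQ$; for a Markov kernel $K$, $\eta_{\chi^2}(K)=\sup\{\chi^2(PK\|QK)/\chi^2(P\|Q):P\ll Q,\ 0<\chi^2(P\|Q)<\infty\}$ with $PK$ the pushforward. An inspection schedule is a strictly increasing subset of $\{1,\dots,H-1\}$. The total testing error of a test $\psi$ is $\mathbb{P}_{H_0}(\psi=1)+\mathbb{P}_{H_1}(\psi=0)$. *)

theory Defs
  imports "HOL-Probability.Probability"
begin

text \<open>Note: in Isabelle,
  absolutely_continuous Q P means P << Q, and RN_deriv Q P is dP/dQ.\<close>
definition chi2 :: "'a measure \<Rightarrow> 'a measure \<Rightarrow> ennreal" where
  "chi2 P Q = (if absolutely_continuous Q P
      then (\<integral>\<^sup>+ x. ennreal ((enn2real (RN_deriv Q P x) - 1)\<^sup>2) \<partial>Q)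
      else \<infinity>)"

definition eta_chi2 :: "'a measure \<Rightarrow> ('a \<Rightarrow> 'a measure) \<Rightarrow> ennreal" where
  "eta_chi2 M K = (SUP PQ \<in> {(P, Q). P \<in> space (prob_algebra M) \<and> Q \<in> space (prob_algebra M)
        \<and> absolutely_continuous Q P \<and> 0 < chi2 P Q \<and> chi2 P Q < \<infinity>}.
      chi2 (fst PQ \<bind> K) (snd PQ \<bind> K) / chi2 (fst PQ) (snd PQ))"

primrec evolve :: "(nat \<Rightarrow> 'a \<Rightarrow> 'a measure) \<Rightarrow> nat \<Rightarrow> nat \<Rightarrow> 'a measure \<Rightarrow> 'a measure" where
  "evolve K t 0 P = P"
| "evolve K t (Suc k) P = evolve K t k P \<bind> K (t + k)"

definition next_insp :: "nat set \<Rightarrow> nat \<Rightarrow> nat \<Rightarrow> nat" where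
  "next_insp T H t = Min {u \<in> T \<union> {H}. t < u}"

text \<open>Total testing error of a test psi (true = reject H0) between Q0 (H0) and Q1 (H1),
  based on n i.i.d. samples.\<close>
definition total_error :: "nat \<Rightarrow> 'b measure \<Rightarrow> 'b measure \<Rightarrow> ((nat \<Rightarrow> 'b) \<Rightarrow> bool) \<Rightarrow> real" where
  "total_error n Q0 Q1 psi =
     measure (PiM {..<n} (\<lambda>_. Q0)) {x \<in> space (PiM {..<n} (\<lambda>_. Q0)). psi x}
   + measure (PiM {..<n} (\<lambda>_. Q1)) {x \<in> space (PiM {..<n} (\<lambda>_. Q1)). \<not> psi x}"

definition distinguishable ::
  "'a measure \<Rightarrow> (nat \<Rightarrow> 'b measure) \<Rightarrow> (nat \<Rightarrow> 'a \<Rightarrow> 'a measure) \<Rightarrow> (nat \<Rightarrow> 'a \<Rightarrow> 'b)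
    \<Rightarrow> nat set \<Rightarrow> nat \<Rightarrow> 'a measure \<Rightarrow> 'a measure \<Rightarrow> nat \<Rightarrow> real \<Rightarrow> nat \<Rightarrow> bool" where
  "distinguishable M N K g T H P0 P1 n eps t =
    (let u = next_insp T H t;
         Q0 = distr (evolve K t (u - t) P0) (N u) (g u);
         Q1 = distr (evolve K t (u - t) P1) (N u) (g u)
     in \<exists>psi. psi \<in> measurable (PiM {..<n} (\<lambda>_. N u)) (count_space UNIV)
              \<and> total_error n Q0 Q1 psi \<le> eps)"

end

theory Submission
  imports Defs
begin

(* Let u(t) be the next inspection after t.  Along the u(t) - t steps from t to u(t) the two
   hypotheses are pushed through the same kernels, so strong data processing shrinks their
   chi^2-divergence from Delta^2 to c <= eta^(u(t) - t) Delta^2.  A test on n samples of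
   Y_u(t) = g(Z_u(t)) is also a test on n samples of Z_u(t), and chi^2 tensorises:
   1 + chi^2(P^n || Q^n) = (1 + c)^n.  The density bound 4 (Q B - P B)^2 <= chi^2(P || Q)
   therefore gives 4 (1 - eps)^2 <= (1 + c)^n - 1, hence (1 - eps)^2 <= n c, i.e. each gap
   u(t) - t is at most H_crit.  The m + 1 gaps of the schedule cover {0..H}, so
   H <= (m + 1) H_crit. *)

lemma chi2_RN_deriv_moments:
  assumes P: "prob_space P" and Q: "prob_space Q" and sets_eq: "sets P = sets Q"
    and fin: "chi2 P Q < \<infinity>"
  defines "f \<equiv> \<lambda>x. enn2real (RN_deriv Q P x)"
  shows "P = density Q (\<lambda>x. ennreal (f x))"
    and "(\<integral>\<^sup>+x. ennreal ((f x)\<^sup>2) \<partial>Q) = 1 + chi2 P Q"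
proof -
  interpret Q: prob_space Q by fact
  interpret P: prob_space P by fact
  have ac: "absolutely_continuous Q P"
    using fin by (auto simp: chi2_def split: if_splits)
  have f_meas [measurable]: "f \<in> borel_measurable Q"
    unfolding f_def by measurable
  have "AE x in Q. RN_deriv Q P x \<noteq> \<infinity>"
    by (rule Q.RN_deriv_finite[OF _ ac sets_eq]) (simp add: P.sigma_finite_measure_axioms)
  then have "density Q (\<lambda>x. ennreal (f x)) = density Q (RN_deriv Q P)"
    by (intro density_cong) (auto simp: f_def less_top)
  then show density_eq: "P = density Q (\<lambda>x. ennreal (f x))"
    using Q.density_RN_deriv[OF ac sets_eq] by simp
  have "(\<integral>\<^sup>+x. ennreal (f x) \<partial>Q) = emeasure (density Q (\<lambda>x. ennreal (f x))) (space Q)"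
    by (subst emeasure_density) (auto intro!: nn_integral_cong)
  also have "\<dots> = 1"
    using density_eq P.emeasure_space_1 sets_eq_imp_space_eq[OF sets_eq] by simp
  finally have int_f: "(\<integral>\<^sup>+x. ennreal (f x) \<partial>Q) = 1" .
  have chi2_eq: "chi2 P Q = (\<integral>\<^sup>+x. ennreal ((f x - 1)\<^sup>2) \<partial>Q)"
    using ac by (simp add: chi2_def f_def)
  have "(\<integral>\<^sup>+x. ennreal ((f x)\<^sup>2) \<partial>Q) + 1 = (\<integral>\<^sup>+x. ennreal ((f x)\<^sup>2) + 1 \<partial>Q)"
    by (subst nn_integral_add) (auto simp: Q.emeasure_space_1)
  also have "\<dots> = (\<integral>\<^sup>+x. ennreal ((f x - 1)\<^sup>2) + 2 * ennreal (f x) \<partial>Q)"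
  proof (rule nn_integral_cong)
    fix x
    have "ennreal ((f x)\<^sup>2) + 1 = ennreal ((f x)\<^sup>2 + 1)"
      by (simp add: ennreal_plus)
    also have "(f x)\<^sup>2 + 1 = (f x - 1)\<^sup>2 + 2 * f x"
      by (simp add: power2_eq_square algebra_simps)
    also have "ennreal \<dots> = ennreal ((f x - 1)\<^sup>2) + 2 * ennreal (f x)"
      by (simp add: f_def ennreal_plus ennreal_mult)
    finally show "ennreal ((f x)\<^sup>2) + 1 = ennreal ((f x - 1)\<^sup>2) + 2 * ennreal (f x)" .
  qed
  also have "\<dots> = chi2 P Q + 2 * 1"
    by (subst nn_integral_add) (auto simp: nn_integral_cmult chi2_eq int_f)
  finally show "(\<integral>\<^sup>+x. ennreal ((f x)\<^sup>2) \<partial>Q) = 1 + chi2 P Q"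
    by (simp add: add.commute add.left_commute ennreal_add_left_cancel flip: one_add_one)
qed

lemma chi2_same:
  assumes "prob_space P"
  shows "chi2 P P = 0"
proof -
  interpret P: prob_space P by fact
  have "AE x in P. 1 = RN_deriv P P x"
    by (rule P.RN_deriv_unique) (auto simp: density_1)
  then have "AE x in P. ennreal ((enn2real (RN_deriv P P x) - 1)\<^sup>2) = 0"
    by (auto elim!: AE_mp)
  then show ?thesis
    by (simp add: chi2_def absolutely_continuous_def nn_integral_0_iff_AE)
qed

lemma chi2_eq_0_imp_eq:
  assumes P: "prob_space P" and Q: "prob_space Q" and sets_eq: "sets P = sets Q"
    and chi2_0: "chi2 P Q = 0"
  shows "P = Q"
proof -
  define f where "f = (\<lambda>x. enn2real (RN_deriv Q P x))"
  have f_meas [measurable]: "f \<in> borel_measurable Q"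
    unfolding f_def by measurable
  have ac: "absolutely_continuous Q P"
    using chi2_0 by (auto simp: chi2_def split: if_splits)
  then have "(\<integral>\<^sup>+x. ennreal ((f x - 1)\<^sup>2) \<partial>Q) = 0"
    using chi2_0 by (simp add: chi2_def f_def)
  then have "AE x in Q. ennreal ((f x - 1)\<^sup>2) = 0"
    by (subst (asm) nn_integral_0_iff_AE) auto
  then have "AE x in Q. ennreal (f x) = 1"
    by (auto elim!: AE_mp)
  then have "density Q (\<lambda>x. ennreal (f x)) = density Q (\<lambda>_. 1)"
    by (intro density_cong) (auto elim!: AE_mp)
  then show ?thesis
    using chi2_RN_deriv_moments(1)[OF P Q sets_eq] chi2_0 by (simp add: density_1 f_def)
qed

lemma bind_in_space_prob_algebra:
  assumes "P \<in> space (prob_algebra M)" and "K \<in> M \<rightarrow>\<^sub>M prob_algebra M"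
  shows "P \<bind> K \<in> space (prob_algebra M)"
  using assms by (auto simp: space_prob_algebra prob_space_bind' sets_bind')

lemma chi2_bind_le:
  assumes P: "P \<in> space (prob_algebra M)" and Q: "Q \<in> space (prob_algebra M)"
    and K: "K \<in> M \<rightarrow>\<^sub>M prob_algebra M" and fin: "chi2 P Q < \<infinity>"
  shows "chi2 (P \<bind> K) (Q \<bind> K) \<le> eta_chi2 M K * chi2 P Q"
proof (cases "chi2 P Q = 0")
  case True
  with P Q have "P = Q"
    by (intro chi2_eq_0_imp_eq) (auto simp: space_prob_algebra)
  then show ?thesis
    using bind_in_space_prob_algebra[OF Q K] by (simp add: chi2_same space_prob_algebra)
next
  case False
  then have pos: "0 < chi2 P Q"
    by (simp add: zero_less_iff_neq_zero)
  have ac: "absolutely_continuous Q P"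
    using fin by (auto simp: chi2_def split: if_splits)
  have "chi2 (P \<bind> K) (Q \<bind> K) = chi2 (P \<bind> K) (Q \<bind> K) / chi2 P Q * chi2 P Q"
    using pos fin by (simp add: ennreal_divide_times ennreal_divide_self)
  also have "\<dots> \<le> eta_chi2 M K * chi2 P Q"
    unfolding eta_chi2_def
    by (intro mult_right_mono SUP_upper2[where i="(P, Q)"]) (use P Q ac pos fin in auto)
  finally show ?thesis .
qed

lemma evolve_in_space_prob_algebra:
  assumes "\<And>j. j < t + k \<Longrightarrow> K j \<in> M \<rightarrow>\<^sub>M prob_algebra M"
    and "P \<in> space (prob_algebra M)"
  shows "evolve K t k P \<in> space (prob_algebra M)"
  using assms by (induction k) (auto intro: bind_in_space_prob_algebra)

lemma chi2_evolve_le: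
  assumes kernels: "\<And>j. j < t + k \<Longrightarrow> K j \<in> M \<rightarrow>\<^sub>M prob_algebra M"
    and contraction: "\<And>j. j < t + k \<Longrightarrow> eta_chi2 M (K j) \<le> ennreal \<eta>"
    and P: "P \<in> space (prob_algebra M)" and Q: "Q \<in> space (prob_algebra M)"
    and chi2_le: "chi2 P Q \<le> ennreal D" and eta_nonneg: "0 \<le> \<eta>" and D_nonneg: "0 \<le> D"
  shows "chi2 (evolve K t k P) (evolve K t k Q) \<le> ennreal (\<eta> ^ k * D)"
  using kernels contraction
proof (induction k)
  case 0
  then show ?case using chi2_le by simp
next
  case (Suc k)
  let ?P = "evolve K t k P" and ?Q = "evolve K t k Q"
  have IH: "chi2 ?P ?Q \<le> ennreal (\<eta> ^ k * D)"
    using Suc by simp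
  have "chi2 (?P \<bind> K (t + k)) (?Q \<bind> K (t + k)) \<le> eta_chi2 M (K (t + k)) * chi2 ?P ?Q"
    using Suc.prems IH
    by (intro chi2_bind_le evolve_in_space_prob_algebra P Q) (auto simp: top_unique less_top[symmetric])
  also have "\<dots> \<le> ennreal \<eta> * ennreal (\<eta> ^ k * D)"
    using Suc.prems IH by (intro mult_mono) auto
  also have "\<dots> = ennreal (\<eta> ^ Suc k * D)"
    using eta_nonneg D_nonneg by (simp add: ennreal_mult[symmetric] mult.assoc)
  finally show ?case by simp
qed

lemma PiM_density_prod:
  assumes P: "prob_space P" and Q: "prob_space Q" and sets_eq: "sets P = sets Q"
    and density_eq: "P = density Q (\<lambda>x. ennreal (f x))"
    and f_meas [measurable]: "f \<in> borel_measurable Q" and f_nonneg: "\<And>x. 0 \<le> f x"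
    and I: "finite I"
  shows "PiM I (\<lambda>_. P) = density (PiM I (\<lambda>_. Q)) (\<lambda>x. ennreal (\<Prod>i\<in>I. f (x i)))"
proof -
  interpret PP: product_prob_space "\<lambda>_. P"
    by (intro product_prob_spaceI) (simp add: P)
  interpret QQ: product_prob_space "\<lambda>_. Q"
    by (intro product_prob_spaceI) (simp add: Q)
  show ?thesis
  proof (rule PP.PiM_eqI[OF I, symmetric])
    show "sets (density (PiM I (\<lambda>_. Q)) (\<lambda>x. ennreal (\<Prod>i\<in>I. f (x i)))) = sets (PiM I (\<lambda>_. P))"
      using sets_eq by (simp only: sets_density) (intro sets_PiM_cong; simp)
  next
    fix A assume "\<And>i. i \<in> I \<Longrightarrow> A i \<in> sets P"
    then have A [measurable]: "\<And>i. i \<in> I \<Longrightarrow> A i \<in> sets Q"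
      using sets_eq by simp
    have indicator_PiE: "indicator (Pi\<^sub>E I A) x = (\<Prod>i\<in>I. indicator (A i) (x i) :: ennreal)"
      if "x \<in> space (PiM I (\<lambda>_. Q))" for x
      using that I by (auto simp: indicator_def PiE_iff space_PiM)
    have "emeasure (density (PiM I (\<lambda>_. Q)) (\<lambda>x. ennreal (\<Prod>i\<in>I. f (x i)))) (Pi\<^sub>E I A)
        = (\<integral>\<^sup>+x. ennreal (\<Prod>i\<in>I. f (x i)) * indicator (Pi\<^sub>E I A) x \<partial>PiM I (\<lambda>_. Q))"
      using A I by (subst emeasure_density) (auto intro!: sets_PiM_I_finite)
    also have "\<dots> = (\<integral>\<^sup>+x. (\<Prod>i\<in>I. ennreal (f (x i)) * indicator (A i) (x i)) \<partial>PiM I (\<lambda>_. Q))"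
      using f_nonneg by (intro nn_integral_cong) (simp add: indicator_PiE prod.distrib prod_ennreal)
    also have "\<dots> = (\<Prod>i\<in>I. \<integral>\<^sup>+y. ennreal (f y) * indicator (A i) y \<partial>Q)"
      using A by (intro QQ.product_nn_integral_prod I) auto
    also have "\<dots> = (\<Prod>i\<in>I. emeasure P (A i))"
      using A by (intro prod.cong) (simp_all add: density_eq emeasure_density)
    finally show "emeasure (density (PiM I (\<lambda>_. Q)) (\<lambda>x. ennreal (\<Prod>i\<in>I. f (x i)))) (Pi\<^sub>E I A)
        = (\<Prod>i\<in>I. emeasure P (A i))" .
  qed
qed

lemma PiM_RN_deriv_moments:
  assumes P: "prob_space P" and Q: "prob_space Q" and sets_eq: "sets P = sets Q"
    and chi2_eq: "chi2 P Q = ennreal c" and c: "0 \<le> c" and I: "finite I"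
  defines "F \<equiv> \<lambda>x. \<Prod>i\<in>I. enn2real (RN_deriv Q P (x i))"
  shows "PiM I (\<lambda>_. P) = density (PiM I (\<lambda>_. Q)) (\<lambda>x. ennreal (F x))"
    and "has_bochner_integral (PiM I (\<lambda>_. Q)) (\<lambda>x. (F x)\<^sup>2) ((1 + c) ^ card I)"
proof -
  define f where "f = (\<lambda>x. enn2real (RN_deriv Q P x))"
  have fin: "chi2 P Q < \<infinity>"
    using chi2_eq by simp
  note moments = chi2_RN_deriv_moments[OF P Q sets_eq fin, folded f_def[THEN fun_cong]]
  have f_meas [measurable]: "f \<in> borel_measurable Q"
    unfolding f_def by measurable
  have f_nonneg: "\<And>x. 0 \<le> f x"
    by (simp add: f_def)
  interpret QQ: product_prob_space "\<lambda>_. Q"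
    by (intro product_prob_spaceI) (simp add: Q)
  have F_meas [measurable]: "F \<in> borel_measurable (PiM I (\<lambda>_. Q))"
    unfolding F_def f_def[THEN fun_cong, symmetric] by measurable
  show "PiM I (\<lambda>_. P) = density (PiM I (\<lambda>_. Q)) (\<lambda>x. ennreal (F x))"
    unfolding F_def f_def[THEN fun_cong, symmetric]
    by (rule PiM_density_prod[OF P Q sets_eq moments(1) f_meas f_nonneg I])
  show "has_bochner_integral (PiM I (\<lambda>_. Q)) (\<lambda>x. (F x)\<^sup>2) ((1 + c) ^ card I)"
  proof (rule has_bochner_integral_nn_integral)
    have "(\<integral>\<^sup>+x. ennreal ((F x)\<^sup>2) \<partial>PiM I (\<lambda>_. Q))
        = (\<integral>\<^sup>+x. (\<Prod>i\<in>I. ennreal ((f (x i))\<^sup>2)) \<partial>PiM I (\<lambda>_. Q))"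
      by (simp add: F_def f_def prod_ennreal prod_power_distrib)
    also have "\<dots> = (\<Prod>i\<in>I. \<integral>\<^sup>+y. ennreal ((f y)\<^sup>2) \<partial>Q)"
      by (intro QQ.product_nn_integral_prod I) auto
    also have "\<dots> = ennreal (1 + c) ^ card I"
      using c by (simp add: moments(2) chi2_eq ennreal_plus)
    also have "\<dots> = ennreal ((1 + c) ^ card I)"
      using c by (intro ennreal_power) simp
    finally show "(\<integral>\<^sup>+x. ennreal ((F x)\<^sup>2) \<partial>PiM I (\<lambda>_. Q)) = ennreal ((1 + c) ^ card I)" .
  qed (use c in auto)
qed

lemma measure_diff_sq_le_density_second_moment:
  assumes Q: "prob_space Q" and P: "prob_space P"
    and density_eq: "P = density Q (\<lambda>x. ennreal (F x))"
    and F_meas [measurable]: "F \<in> borel_measurable Q" and F_nonneg: "\<And>x. 0 \<le> F x"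
    and second_moment: "has_bochner_integral Q (\<lambda>x. (F x)\<^sup>2) S"
    and B [measurable]: "B \<in> sets Q"
  shows "4 * (measure Q B - measure P B)\<^sup>2 \<le> S - 1"
proof -
  interpret Q: prob_space Q by fact
  interpret P: prob_space P by fact
  define q where "q = measure Q B"
  define p where "p = measure P B"
  define b where "b = (\<lambda>x. indicator B x :: real)"
  define l where "l = 4 * (q - p)"
  \<comment> \<open>Cauchy-Schwarz in the form E_Q[(l (q - b) - (F - 1))^2] >= 0, evaluated at the optimal l.\<close>
  have [measurable]: "b \<in> borel_measurable Q"
    unfolding b_def by measurable
  have int_1: "has_bochner_integral Q (\<lambda>_. 1 :: real) 1"
    by (rule has_bochner_integral_nn_integral) (auto simp: Q.emeasure_space_1)
  have int_b: "has_bochner_integral Q b q"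
    unfolding b_def q_def by (rule has_bochner_integral_real_indicator) (auto simp: less_top[symmetric])
  have int_F: "has_bochner_integral Q F 1"
  proof (rule has_bochner_integral_nn_integral)
    show "(\<integral>\<^sup>+x. ennreal (F x) \<partial>Q) = ennreal 1"
      using P.emeasure_space_1 unfolding density_eq
      by (subst (asm) emeasure_density) (auto intro!: nn_integral_cong)
  qed (auto simp: F_nonneg)
  have int_bF: "has_bochner_integral Q (\<lambda>x. b x * F x) p"
  proof (rule has_bochner_integral_nn_integral)
    have "(\<integral>\<^sup>+x. ennreal (b x * F x) \<partial>Q) = (\<integral>\<^sup>+x. ennreal (F x) * indicator B x \<partial>Q)"
      by (intro nn_integral_cong) (simp add: b_def indicator_def)
    also have "\<dots> = emeasure P B"
      unfolding density_eq by (simp add: emeasure_density)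
    finally show "(\<integral>\<^sup>+x. ennreal (b x * F x) \<partial>Q) = ennreal p"
      by (simp add: p_def P.emeasure_eq_measure)
  qed (auto simp: b_def F_nonneg p_def)
  have expanded: "has_bochner_integral Q
      (\<lambda>x. (l\<^sup>2 * q\<^sup>2 + 2 * l * q + 1) * 1 + (l\<^sup>2 - 2 * l\<^sup>2 * q - 2 * l) * b x
        + (- 2 * l * q - 2) * F x + 2 * l * (b x * F x) + (F x)\<^sup>2)
      ((l\<^sup>2 * q\<^sup>2 + 2 * l * q + 1) * 1 + (l\<^sup>2 - 2 * l\<^sup>2 * q - 2 * l) * q
        + (- 2 * l * q - 2) * 1 + 2 * l * p + S)"
    by (intro has_bochner_integral_add has_bochner_integral_mult_right
        int_1 int_b int_F int_bF second_moment)
  have square_expansion: "(l\<^sup>2 * q\<^sup>2 + 2 * l * q + 1) * 1 + (l\<^sup>2 - 2 * l\<^sup>2 * q - 2 * l) * b x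
        + (- 2 * l * q - 2) * F x + 2 * l * (b x * F x) + (F x)\<^sup>2
      = (l * (q - b x) - (F x - 1))\<^sup>2" for x
    by (cases "x \<in> B") (simp_all add: b_def power2_eq_square algebra_simps)
  have "has_bochner_integral Q (\<lambda>x. (l * (q - b x) - (F x - 1))\<^sup>2)
      (l\<^sup>2 * (q * (1 - q)) - 2 * l * (q - p) + S - 1)"
  proof (rule has_bochner_integral_cong[THEN iffD1, OF refl _ _ expanded])
    show "(l\<^sup>2 * q\<^sup>2 + 2 * l * q + 1) * 1 + (l\<^sup>2 - 2 * l\<^sup>2 * q - 2 * l) * q
        + (- 2 * l * q - 2) * 1 + 2 * l * p + S = l\<^sup>2 * (q * (1 - q)) - 2 * l * (q - p) + S - 1"
      by (simp add: power2_eq_square algebra_simps)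
  qed (use square_expansion in simp)
  then have "0 \<le> l\<^sup>2 * (q * (1 - q)) - 2 * l * (q - p) + S - 1"
    using integral_nonneg_AE[of "\<lambda>x. (l * (q - b x) - (F x - 1))\<^sup>2" Q]
    by (simp add: has_bochner_integral_integral_eq)
  moreover have "l\<^sup>2 * (q * (1 - q)) \<le> l\<^sup>2 * (1 / 4)"
  proof (rule mult_left_mono)
    show "q * (1 - q) \<le> 1 / 4"
      using zero_le_power2[of "q - 1/2"] by (simp add: power2_eq_square algebra_simps)
  qed simp
  ultimately show ?thesis
    unfolding l_def q_def p_def by (simp add: power2_eq_square algebra_simps)
qed

lemma total_error_chi2_bound:
  assumes P: "prob_space P" and Q: "prob_space Q" and sets_eq: "sets P = sets Q"
    and chi2_eq: "chi2 P Q = ennreal c" and c: "0 \<le> c"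
    and phi [measurable]: "phi \<in> PiM {..<n} (\<lambda>_. Q) \<rightarrow>\<^sub>M count_space UNIV"
  shows "4 * (1 - total_error n P Q phi)\<^sup>2 \<le> (1 + c) ^ n - 1"
proof -
  define Pn where "Pn = PiM {..<n} (\<lambda>_. P)"
  define Qn where "Qn = PiM {..<n} (\<lambda>_. Q)"
  define F where "F = (\<lambda>x. \<Prod>i<n. enn2real (RN_deriv Q P (x i)))"
  interpret Pn: prob_space Pn
    unfolding Pn_def by (intro prob_space_PiM P)
  interpret Qn: prob_space Qn
    unfolding Qn_def by (intro prob_space_PiM Q)
  note moments = PiM_RN_deriv_moments[OF P Q sets_eq chi2_eq c finite_lessThan, of n,
      folded F_def[THEN fun_cong]]
  have "F \<in> borel_measurable Qn"
    unfolding F_def Qn_def by measurable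
  moreover have "\<And>x. 0 \<le> F x"
    by (simp add: F_def prod_nonneg)
  moreover define A where "A = {x \<in> space Qn. phi x}"
  moreover have A: "A \<in> sets Qn"
    unfolding A_def Qn_def by measurable
  ultimately have "4 * (measure Qn A - measure Pn A)\<^sup>2 \<le> (1 + c) ^ n - 1"
    using moments
    by (intro measure_diff_sq_le_density_second_moment Qn.prob_space_axioms Pn.prob_space_axioms)
      (simp_all add: Pn_def Qn_def)
  moreover have "space Pn = space Qn"
    unfolding Pn_def Qn_def using sets_eq by (intro sets_eq_imp_space_eq sets_PiM_cong) auto
  then have "total_error n P Q phi = measure Pn A + (1 - measure Qn A)"
    using Qn.prob_compl[OF A]
    by (simp add: total_error_def Pn_def[symmetric] Qn_def[symmetric] A_def set_diff_eq cong: conj_cong)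
  ultimately show ?thesis
    by simp
qed

lemma measure_PiM_distr_pred:
  assumes P: "prob_space P" and g [measurable]: "g \<in> P \<rightarrow>\<^sub>M N"
    and R [measurable]: "R \<in> PiM I (\<lambda>_. N) \<rightarrow>\<^sub>M count_space UNIV" and I: "finite I"
  shows "measure (PiM I (\<lambda>_. distr P N g)) {x \<in> space (PiM I (\<lambda>_. distr P N g)). R x}
    = measure (PiM I (\<lambda>_. P)) {x \<in> space (PiM I (\<lambda>_. P)). R (\<lambda>i\<in>I. g (x i))}"
proof -
  \<comment> \<open>distr_PiM_finite_prob_space' needs a probability space as target, which N need not be.\<close>
  define N' where "N' = distr P N g"
  have sets_N': "sets N' = sets N"
    by (simp add: N'_def)
  have g' [measurable]: "g \<in> P \<rightarrow>\<^sub>M N'"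
    using g by (simp add: measurable_cong_sets[OF refl sets_N'])
  have "prob_space N'"
    unfolding N'_def by (rule prob_space.prob_space_distr[OF P g])
  then have "distr (PiM I (\<lambda>_. P)) (PiM I (\<lambda>_. N')) (compose I g) = PiM I (\<lambda>_. distr P N' g)"
    by (intro distr_PiM_finite_prob_space' I P g')
  also have "distr P N' g = N'"
    unfolding N'_def by (rule distr_cong) simp_all
  finally have PiM_eq: "PiM I (\<lambda>_. N') = distr (PiM I (\<lambda>_. P)) (PiM I (\<lambda>_. N')) (\<lambda>x. \<lambda>i\<in>I. g (x i))"
    by (simp add: compose_def restrict_def)
  have sets_PiM: "sets (PiM I (\<lambda>_. N')) = sets (PiM I (\<lambda>_. N))"
    using sets_N' by (intro sets_PiM_cong) auto
  have R' [measurable]: "R \<in> PiM I (\<lambda>_. N') \<rightarrow>\<^sub>M count_space UNIV"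
    using R by (simp add: measurable_cong_sets[OF sets_PiM refl])
  define S where "S = {x \<in> space (PiM I (\<lambda>_. N')). R x}"
  have G: "(\<lambda>x. \<lambda>i\<in>I. g (x i)) \<in> PiM I (\<lambda>_. P) \<rightarrow>\<^sub>M PiM I (\<lambda>_. N')"
    by measurable
  have "S \<in> sets (PiM I (\<lambda>_. N'))"
    unfolding S_def by measurable
  then have "measure (PiM I (\<lambda>_. N')) S
      = measure (PiM I (\<lambda>_. P)) ((\<lambda>x. \<lambda>i\<in>I. g (x i)) -` S \<inter> space (PiM I (\<lambda>_. P)))"
    using measure_distr[OF G] unfolding PiM_eq[symmetric] by blast
  also have "(\<lambda>x. \<lambda>i\<in>I. g (x i)) -` S \<inter> space (PiM I (\<lambda>_. P))
      = {x \<in> space (PiM I (\<lambda>_. P)). R (\<lambda>i\<in>I. g (x i))}"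
    using measurable_space[OF G] by (auto simp: S_def)
  finally show ?thesis
    by (simp add: S_def N'_def)
qed

lemma total_error_distr:
  assumes "prob_space P" and "prob_space Q" and "g \<in> P \<rightarrow>\<^sub>M N" and "g \<in> Q \<rightarrow>\<^sub>M N"
    and psi [measurable]: "psi \<in> PiM {..<n} (\<lambda>_. N) \<rightarrow>\<^sub>M count_space UNIV"
  shows "total_error n (distr P N g) (distr Q N g) psi
    = total_error n P Q (\<lambda>x. psi (\<lambda>i\<in>{..<n}. g (x i)))"
proof -
  have "(\<lambda>x. \<not> psi x) \<in> PiM {..<n} (\<lambda>_. N) \<rightarrow>\<^sub>M count_space UNIV"
    by measurable
  then show ?thesis
    unfolding total_error_def using assms
    by (simp add: measure_PiM_distr_pred)
qed

lemma one_plus_power_le: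
  fixes x :: real
  assumes "0 \<le> x" and "real n * x \<le> 1"
  shows "(1 + x) ^ n \<le> 1 + 2 * real n * x"
proof -
  have "(1 + x) ^ n \<le> exp x ^ n"
    using assms(1) by (intro power_mono) (simp_all add: exp_ge_add_one_self add.commute)
  also have "\<dots> = exp (real n * x)"
    by (simp add: exp_of_nat_mult)
  also have "\<dots> \<le> 1 + real n * x + (real n * x)\<^sup>2"
    using assms by (intro exp_bound) simp_all
  also have "(real n * x)\<^sup>2 \<le> real n * x"
    using assms by (simp add: power2_eq_square mult_left_le_one_le)
  finally show ?thesis
    by (simp add: algebra_simps)
qed

lemma le_mult_of_four_le_one_plus_power:
  fixes a x :: real
  assumes "0 \<le> x" and "a \<le> 1" and "4 * a \<le> (1 + x) ^ n - 1"
  shows "a \<le> real n * x"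
proof (cases "real n * x \<le> 1")
  case True
  have "0 \<le> real n * x"
    using assms(1) by simp
  then show ?thesis
    using one_plus_power_le[OF assms(1) True] assms(3) by linarith
qed (use assms in simp)

lemma next_insp_bounds:
  assumes "T \<subseteq> {1..H - 1}" and "t < H"
  shows "t < next_insp T H t" and "next_insp T H t \<le> H" and "next_insp T H t \<in> T \<union> {H}"
proof -
  let ?U = "{u \<in> T \<union> {H}. t < u}"
  have "?U \<subseteq> {0..H}"
    using assms(1) by auto
  then have "finite ?U"
    by (rule finite_subset) simp
  moreover have "H \<in> ?U"
    using assms(2) by simp
  ultimately have "Min ?U \<in> ?U" and "Min ?U \<le> H"
    using Min_in Min_le by blast+
  then show "t < next_insp T H t" and "next_insp T H t \<le> H" and "next_insp T H t \<in> T \<union> {H}"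
    by (simp_all add: next_insp_def)
qed

lemma distinguishable_imp_margin_sq_le:
  assumes kernels: "\<And>j. j < H \<Longrightarrow> K j \<in> M \<rightarrow>\<^sub>M prob_algebra M"
    and contraction: "\<And>j. j < H \<Longrightarrow> eta_chi2 M (K j) \<le> ennreal \<eta>"
    and eta_nonneg: "0 \<le> \<eta>"
    and schedule: "T \<subseteq> {1..H - 1}" and t: "t < H"
    and measurable_output: "g (next_insp T H t) \<in> M \<rightarrow>\<^sub>M N (next_insp T H t)"
    and P0: "P0 \<in> space (prob_algebra M)" and P1: "P1 \<in> space (prob_algebra M)"
    and chi2_le: "chi2 P0 P1 \<le> ennreal D" and D_nonneg: "0 \<le> D"
    and eps: "0 \<le> \<epsilon>" "\<epsilon> \<le> 1"
    and dist: "distinguishable M N K g T H P0 P1 n \<epsilon> t"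
  shows "(1 - \<epsilon>)\<^sup>2 \<le> real n * (\<eta> ^ (next_insp T H t - t) * D)"
proof -
  define u where "u = next_insp T H t"
  define k where "k = u - t"
  define E0 where "E0 = evolve K t k P0"
  define E1 where "E1 = evolve K t k P1"
  have "t + k \<le> H"
    using next_insp_bounds[OF schedule t] by (simp add: k_def u_def)
  then have kernels': "\<And>j. j < t + k \<Longrightarrow> K j \<in> M \<rightarrow>\<^sub>M prob_algebra M"
    and contraction': "\<And>j. j < t + k \<Longrightarrow> eta_chi2 M (K j) \<le> ennreal \<eta>"
    using kernels contraction by simp_all
  have E0: "E0 \<in> space (prob_algebra M)" and E1: "E1 \<in> space (prob_algebra M)"
    unfolding E0_def E1_def using kernels' P0 P1 by (simp_all add: evolve_in_space_prob_algebra)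
  have chi2_E: "chi2 E0 E1 \<le> ennreal (\<eta> ^ k * D)"
    unfolding E0_def E1_def
    by (rule chi2_evolve_le[OF kernels' contraction' P0 P1 chi2_le eta_nonneg D_nonneg])
  define c where "c = enn2real (chi2 E0 E1)"
  have chi2_c: "chi2 E0 E1 = ennreal c"
    using chi2_E by (auto simp: c_def ennreal_enn2real_if top_unique)
  have c: "0 \<le> c" "c \<le> \<eta> ^ k * D"
    using chi2_E eta_nonneg D_nonneg unfolding chi2_c by (simp_all add: c_def ennreal_le_iff)
  obtain psi where psi [measurable]: "psi \<in> PiM {..<n} (\<lambda>_. N u) \<rightarrow>\<^sub>M count_space UNIV"
    and err: "total_error n (distr E0 (N u) (g u)) (distr E1 (N u) (g u)) psi \<le> \<epsilon>"
    using dist unfolding distinguishable_def Let_def u_def[symmetric] k_def[symmetric]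
      E0_def[symmetric] E1_def[symmetric] by blast
  have E: "prob_space E0" "prob_space E1" "sets E0 = sets M" "sets E1 = sets M"
    using E0 E1 by (auto simp: space_prob_algebra)
  have [measurable]: "g u \<in> E1 \<rightarrow>\<^sub>M N u" "g u \<in> E0 \<rightarrow>\<^sub>M N u"
    using measurable_output
    by (simp_all add: u_def measurable_cong_sets[OF E(3) refl] measurable_cong_sets[OF E(4) refl])
  define phi where "phi = (\<lambda>x. psi (\<lambda>i\<in>{..<n}. g u (x i)))"
  have "phi \<in> PiM {..<n} (\<lambda>_. E1) \<rightarrow>\<^sub>M count_space UNIV"
    unfolding phi_def by measurable
  then have "4 * (1 - total_error n E0 E1 phi)\<^sup>2 \<le> (1 + c) ^ n - 1"
    using E by (intro total_error_chi2_bound chi2_c c) simp_all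
  moreover have "total_error n E0 E1 phi \<le> \<epsilon>"
    using err E by (simp add: phi_def total_error_distr)
  then have "(1 - \<epsilon>)\<^sup>2 \<le> (1 - total_error n E0 E1 phi)\<^sup>2"
    using eps by (intro power_mono) simp_all
  ultimately have "(1 - \<epsilon>)\<^sup>2 \<le> real n * c"
    using eps by (intro le_mult_of_four_le_one_plus_power c) (simp_all add: power_le_one)
  also have "\<dots> \<le> real n * (\<eta> ^ k * D)"
    using c by (intro mult_left_mono) simp_all
  finally show ?thesis
    by (simp add: k_def u_def)
qed

lemma le_log_ratio_of_le_mult_power:
  fixes \<eta> a b :: real
  assumes "0 < \<eta>" and "\<eta> < 1" and "0 < a" and "a \<le> b * \<eta> ^ k"
  shows "real k \<le> (ln b - ln a) / ln (1 / \<eta>)"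
proof -
  have pos: "0 < b * \<eta> ^ k"
    using assms by linarith
  then have "0 < b"
    using assms(1) by (simp add: zero_less_mult_iff)
  have "ln a \<le> ln (b * \<eta> ^ k)"
    using assms pos by simp
  also have "\<dots> = ln b + real k * ln \<eta>"
    using \<open>0 < b\<close> assms(1) by (simp add: ln_mult ln_realpow)
  finally have "ln a \<le> ln b + real k * ln \<eta>" .
  moreover have "ln (1 / \<eta>) = - ln \<eta>" and ln_pos: "0 < ln (1 / \<eta>)"
    using assms by (simp_all add: ln_div)
  ultimately have "real k * ln (1 / \<eta>) \<le> ln b - ln a"
    by simp
  then show ?thesis
    using pos_le_divide_eq[OF ln_pos] by blast
qed

lemma remaining_horizon_le:
  assumes schedule: "T \<subseteq> {1..H - 1}"
    and gap: "\<And>t. t < H \<Longrightarrow> real (next_insp T H t - t) \<le> L"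
  shows "a < H \<Longrightarrow> real (H - a) \<le> real (card {u \<in> T. a < u} + 1) * L"
proof (induction "H - a" arbitrary: a rule: less_induct)
  case less
  define u where "u = next_insp T H a"
  have u: "a < u" "u \<le> H" "u \<in> T \<union> {H}"
    using next_insp_bounds[OF schedule less.prems] by (simp_all add: u_def)
  have gap_a: "real (u - a) \<le> L"
    using gap[OF less.prems] by (simp add: u_def)
  then have "1 \<le> L"
    using u(1) by linarith
  show ?case
  proof (cases "u = H")
    case True
    have "0 \<le> real (card {v \<in> T. a < v}) * L"
      using \<open>1 \<le> L\<close> by simp
    then show ?thesis
      using gap_a True by (simp only: of_nat_add of_nat_1 distrib_right mult_1)
  next
    case False
    with u have "u \<in> T" "u < H"
      by auto
    have "finite T"
      using schedule by (rule finite_subset) simp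
    then have "card (insert u {v \<in> T. u < v}) \<le> card {v \<in> T. a < v}"
      using \<open>u \<in> T\<close> u(1) by (intro card_mono) auto
    then have card_le: "card {v \<in> T. u < v} + 1 \<le> card {v \<in> T. a < v}"
      using \<open>finite T\<close> by simp
    have "real (H - a) = real (u - a) + real (H - u)"
      using u \<open>u < H\<close> by simp
    also have "\<dots> \<le> L + real (card {v \<in> T. u < v} + 1) * L"
      using gap_a less.hyps[of u] u(1) \<open>u < H\<close> by (simp add: diff_less_mono2)
    also have "\<dots> = real (card {v \<in> T. u < v} + 1 + 1) * L"
      by (simp add: algebra_simps)
    also have "\<dots> \<le> real (card {v \<in> T. a < v} + 1) * L"
      using card_le \<open>1 \<le> L\<close> by (intro mult_right_mono) simp_all
    finally show ?thesis .
  qed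
qed

theorem corollary7:
  fixes M :: "'a measure" and N :: "nat \<Rightarrow> 'b measure"
    and K :: "nat \<Rightarrow> 'a \<Rightarrow> 'a measure" and g :: "nat \<Rightarrow> 'a \<Rightarrow> 'b"
    and T :: "nat set" and H n :: nat and \<eta> D2 \<epsilon> :: real
    and P0 P1 :: "nat \<Rightarrow> 'a measure"
  assumes kernels: "\<And>j. j < H \<Longrightarrow> K j \<in> M \<rightarrow>\<^sub>M prob_algebra M"
    and contraction: "\<And>j. j < H \<Longrightarrow> eta_chi2 M (K j) \<le> ennreal \<eta>"
    and eta_pos: "0 < \<eta>" and eta_lt1: "\<eta> < 1"
    and schedule: "T \<subseteq> {1..H - 1}"
    and outputs: "\<And>u. u \<in> T \<union> {H} \<Longrightarrow> g u \<in> M \<rightarrow>\<^sub>M N u"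
    and n_ge1: "1 \<le> n"
    and D2_pos: "0 < D2"
    and eps_pos: "0 < \<epsilon>" and eps_lt: "\<epsilon> < 1/2"
    and P0_prob: "\<And>t. t < H \<Longrightarrow> P0 t \<in> space (prob_algebra M)"
    and P1_prob: "\<And>t. t < H \<Longrightarrow> P1 t \<in> space (prob_algebra M)"
    and abs_cont: "\<And>t. t < H \<Longrightarrow> absolutely_continuous (P1 t) (P0 t)"
    and chi2_eq: "\<And>t. t < H \<Longrightarrow> chi2 (P0 t) (P1 t) = ennreal D2"
    and dist: "\<And>t. t < H \<Longrightarrow> distinguishable M N K g T H (P0 t) (P1 t) n \<epsilon> t"
  shows "int (card T) \<ge>
           \<lceil>real H / ((ln (real n * D2) - 2 * ln (1 - \<epsilon>)) / ln (1 / \<eta>))\<rceil> - 1"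
proof (cases "H = 0")
  case False
  define L where "L = (ln (real n * D2) - 2 * ln (1 - \<epsilon>)) / ln (1 / \<eta>)"
  have gap: "real (next_insp T H t - t) \<le> L" if t: "t < H" for t
  proof -
    have "(1 - \<epsilon>)\<^sup>2 \<le> real n * (\<eta> ^ (next_insp T H t - t) * D2)"
      using eta_pos D2_pos eps_pos eps_lt chi2_eq[OF t]
      by (intro distinguishable_imp_margin_sq_le[OF kernels contraction _ schedule t
            outputs[OF next_insp_bounds(3)[OF schedule t]] P0_prob[OF t] P1_prob[OF t]
            _ _ _ _ dist[OF t]])
        simp_all
    then show ?thesis
      using le_log_ratio_of_le_mult_power[OF eta_pos eta_lt1, of "(1 - \<epsilon>)\<^sup>2"] eps_lt
      by (simp add: L_def ln_realpow ac_simps)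
  qed
  have "1 \<le> L"
    using gap[of 0] next_insp_bounds(1)[OF schedule, of 0] False by simp
  moreover have "{u \<in> T. 0 < u} = T"
    using schedule by auto
  then have "real H \<le> real (card T + 1) * L"
    using remaining_horizon_le[OF schedule gap, of 0] False by simp
  ultimately have "real H / L \<le> real (card T + 1)"
    by (simp add: pos_divide_le_eq)
  then show ?thesis
    unfolding L_def[symmetric] by linarith
qed simp

end
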